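(* Let $u$ be a parking sorted configuration on $K_{m,n}$, and for $s\in\mathbb Z$ let $u[s]$ be the configuration equal to $u$ outside the sink and equal to $s$ at $a_m$ (each $u[s]$ is again parking sorted). Let $F_u(x,y)=\sum_{s\in\mathbb Z}x^{\mathrm{xpara}(u[s])}y^{\mathrm{ypara}(u[s])}$. Let $S_u^+=\{s\in\mathbb Z: s\text{ is left and } s+1\text{ is right}\}$ and $S_u^-=\{s\in\mathbb Z: s\text{ is right and } s+1\text{ is left}\}$ (these are finite, with $|S_u^+|=|S_u^-|+1$). Then $$F_u(x,y)=\frac{1-xy}{(1-x)(1-y)}\Big(\sum_{s\in S_u^+}x^{\mathrm{xpara}(u[s])}y^{\mathrm{ypara}(u[s])}-\sum_{s\in S_u^-}x^{\mathrm{xpara}(u[s])}y^{\mathrm{ypara}(u[s])}\Big).$$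
   Context: Let $m,n\ge 1$. $K_{m,n}$ is the complete bipartite graph with vertex set $V=A_m\sqcup B_n$, $A_m=\{a_1,\dots,a_m\}$, $B_n=\{b_1,\dots,b_n\}$, with exactly one edge $\{a_i,b_j\}$ for every $i,j$; $a_m$ is the sink. A configuration is a function $u:V\to\mathbb Z$. For $c\in V$ with graph degree $d_c$, $\Delta^{(c)}=d_c e_c-\sum_{c'\text{ adjacent to }c}e_{c'}$ ($e_c$ the indicator of $c$), $\Delta^{(C)}=\sum_{c\in C}\Delta^{(c)}$. $u$ is parking if $u_c\ge0$ for $c\ne a_m$ and for every non-empty $C\subseteq V\setminus\{a_m\}$, $u-\Delta^{(C)}$ has a negative value at a vertex other than $a_m$; sorted if $u_{a_1}\le\dots\le u_{a_{m-1}}$ and $u_{b_1}\le\dots\le u_{b_n}$. The $r$-vector of a parking sorted $u$ is $(r_1,\dots,r_n)$, $r_i=u_{b_i}+1-\#\{j\in\{1,\dots,m-1\}: u_{a_j}+1\le i-1\}$; it depends only on the values outside the sink. For $\sigma\in\mathbb Z$ write $\sigma=qn+t$ with $0\le t<n$; $\sigma$ is called right if $q+r_{t+1}\ge1$ and left otherwise. $\mathrm{xpara}(u)=\#\{\sigma>u_{a_m}:\sigma\text{ left}\}$ and $\mathrm{ypara}(u)=\#\{\sigma\le u_{a_m}:\sigma\text{ right}\}$ (equivalently $\mathrm{xpara}(u)=(m-1)(n-1)+\mathrm{rank}(u)-\mathrm{degree}(u)$, $\mathrm{ypara}(u)=\mathrm{rank}(u)+1$). The identity is one of formal power series in $x,y$.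 *)

theory Defs
  imports "HOL-Computational_Algebra.Formal_Power_Series"
begin

text \<open>Vertices of K_{m,n}: A i (1 <= i <= m) and B j (1 <= j <= n); the sink is A m.\<close>
datatype vert = A nat | B nat

definition verts :: "nat \<Rightarrow> nat \<Rightarrow> vert set" where
  "verts m n = {A i | i. 1 \<le> i \<and> i \<le> m} \<union> {B j | j. 1 \<le> j \<and> j \<le> n}"

definition adj :: "nat \<Rightarrow> nat \<Rightarrow> vert \<Rightarrow> vert \<Rightarrow> bool" where
  "adj m n c c' \<longleftrightarrow>
     (\<exists>i j. 1 \<le> i \<and> i \<le> m \<and> 1 \<le> j \<and> j \<le> n \<and>
        ((c = A i \<and> c' = B j) \<or> (c = B j \<and> c' = A i)))"

definition deg :: "nat \<Rightarrow> nat \<Rightarrow> vert \<Rightarrow> nat" where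
  "deg m n c = card {c' \<in> verts m n. adj m n c c'}"

definition lap :: "nat \<Rightarrow> nat \<Rightarrow> vert \<Rightarrow> vert \<Rightarrow> int" where
  "lap m n c v = (if v = c then int (deg m n c) else 0) - (if adj m n c v then 1 else 0)"

definition lapset :: "nat \<Rightarrow> nat \<Rightarrow> vert set \<Rightarrow> vert \<Rightarrow> int" where
  "lapset m n C v = (\<Sum>c\<in>C. lap m n c v)"

definition parking :: "nat \<Rightarrow> nat \<Rightarrow> (vert \<Rightarrow> int) \<Rightarrow> bool" where
  "parking m n u \<longleftrightarrow>
     (\<forall>c \<in> verts m n - {A m}. 0 \<le> u c) \<and>
     (\<forall>C. C \<noteq> {} \<and> C \<subseteq> verts m n - {A m} \<longrightarrow>
        (\<exists>v \<in> verts m n - {A m}. u v - lapset m n C v < 0))"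

definition sorted_conf :: "nat \<Rightarrow> nat \<Rightarrow> (vert \<Rightarrow> int) \<Rightarrow> bool" where
  "sorted_conf m n u \<longleftrightarrow>
     (\<forall>i j. 1 \<le> i \<and> i \<le> j \<and> j \<le> m - 1 \<longrightarrow> u (A i) \<le> u (A j)) \<and>
     (\<forall>i j. 1 \<le> i \<and> i \<le> j \<and> j \<le> n \<longrightarrow> u (B i) \<le> u (B j))"

definition rvec :: "nat \<Rightarrow> nat \<Rightarrow> (vert \<Rightarrow> int) \<Rightarrow> nat \<Rightarrow> int" where
  "rvec m n u i = u (B i) + 1 - int (card {j \<in> {1..m-1}. u (A j) + 1 \<le> int i - 1})"

definition is_right :: "nat \<Rightarrow> nat \<Rightarrow> (vert \<Rightarrow> int) \<Rightarrow> int \<Rightarrow> bool" where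
  "is_right m n u \<sigma> \<longleftrightarrow>
     \<sigma> div int n + rvec m n u (nat (\<sigma> mod int n) + 1) \<ge> 1"

abbreviation is_left :: "nat \<Rightarrow> nat \<Rightarrow> (vert \<Rightarrow> int) \<Rightarrow> int \<Rightarrow> bool" where
  "is_left m n u \<sigma> \<equiv> \<not> is_right m n u \<sigma>"

definition xpara :: "nat \<Rightarrow> nat \<Rightarrow> (vert \<Rightarrow> int) \<Rightarrow> nat" where
  "xpara m n u = card {\<sigma>. \<sigma> > u (A m) \<and> is_left m n u \<sigma>}"

definition ypara :: "nat \<Rightarrow> nat \<Rightarrow> (vert \<Rightarrow> int) \<Rightarrow> nat" where
  "ypara m n u = card {\<sigma>. \<sigma> \<le> u (A m) \<and> is_right m n u \<sigma>}"

definition set_sink :: "nat \<Rightarrow> (vert \<Rightarrow> int) \<Rightarrow> int \<Rightarrow> vert \<Rightarrow> int" where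
  "set_sink m u s = u(A m := s)"

text \<open>Bivariate formal power series in x,y as real fps fps: the outer variable is y,
  the inner variable is x.\<close>
definition xvar :: "real fps fps" where "xvar = fps_const fps_X"
definition yvar :: "real fps fps" where "yvar = fps_X"

definition monom2 :: "nat \<Rightarrow> nat \<Rightarrow> real fps fps" where
  "monom2 a b = xvar ^ a * yvar ^ b"

definition Fser :: "nat \<Rightarrow> nat \<Rightarrow> (vert \<Rightarrow> int) \<Rightarrow> real fps fps" where
  "Fser m n u = Abs_fps (\<lambda>b. Abs_fps (\<lambda>a. real (card
      {s::int. xpara m n (set_sink m u s) = a \<and> ypara m n (set_sink m u s) = b})))"

definition Splus :: "nat \<Rightarrow> nat \<Rightarrow> (vert \<Rightarrow> int) \<Rightarrow> int set" where
  "Splus m n u = {s. is_left m n u s \<and> is_right m n u (s + 1)}"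

definition Sminus :: "nat \<Rightarrow> nat \<Rightarrow> (vert \<Rightarrow> int) \<Rightarrow> int set" where
  "Sminus m n u = {s. is_right m n u s \<and> is_left m n u (s + 1)}"

end

theory Submission
  imports Defs
begin

text \<open>Only the left/right pattern of the integers enters \<open>u[s]\<close>: raising the sink
  value from \<open>s - 1\<close> to \<open>s\<close> multiplies the monomial by \<open>y\<close> if \<open>s\<close> is right and
  divides it by \<open>x\<close> if \<open>s\<close> is left. Hence \<open>(1 - x)(1 - y)\<close> times each monomial is the
  increment of a potential plus \<open>(1 - xy)\<close> times the monomial wherever the pattern switches.
  All sufficiently negative integers are left and all sufficiently positive ones are right, so
  the telescoping happens over a finite window, and the two geometric tails outside it cancel
  the boundary values of the potential.\<close>

unbundle fps_syntax

lemma sum_int_telescope: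
  fixes f :: "int \<Rightarrow> 'a::ab_group_add"
  assumes "a - 1 \<le> b"
  shows "(\<Sum>k\<in>{a..b}. f (k + 1) - f k) = f (b + 1) - f a"
  using assms
proof (induction b rule: int_ge_induct)
  case base
  then show ?case by simp
next
  case (step b)
  have "{a..b + 1} = insert (b + 1) {a..b}" using step.hyps by auto
  then show ?case using step.IH by (simp add: algebra_simps)
qed

lemma sum_int_shift:
  "(\<Sum>k\<in>{a - 1..b - 1}. f (k + 1)) = (\<Sum>k\<in>{a..b::int}. f k)"
  by (rule sum.reindex_bij_witness[of _ "\<lambda>k. k - 1" "\<lambda>k. k + 1"]) auto

lemma one_minus_fps_X_mult_ones: "(1 - fps_X) * Abs_fps (\<lambda>_. 1 :: 'a::ring_1) = 1"
  using fps_right_inverse[of "1 - fps_X" "1 :: 'a"] by (simp add: fps_lr_inverse_one_minus_fps_X(2))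

lemma monom2_nth: "monom2 a b $ j $ i = (if j = b \<and> i = a then 1 else 0)"
  by (simp add: monom2_def xvar_def yvar_def fps_X_power_mult_right_nth)

lemma monom2_Suc_left: "monom2 (Suc a) b = xvar * monom2 a b"
  by (simp add: monom2_def algebra_simps)

lemma monom2_Suc_right: "monom2 a (Suc b) = yvar * monom2 a b"
  by (simp add: monom2_def algebra_simps)

lemma inverse_mult_one_minus_xvar_one_minus_yvar:
  "inverse ((1 - xvar) * (1 - yvar)) * ((1 - xvar) * (1 - yvar)) = 1"
proof -
  let ?f = "(1 - xvar) * (1 - yvar)"
  have f0: "?f $ 0 = 1 - fps_X"
    by (simp add: xvar_def yvar_def algebra_simps)
  have "(1 - fps_X :: real fps) * inverse (1 - fps_X) = 1"
    by (rule inverse_mult_eq_1') simp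
  moreover have "inverse (1 - fps_X :: real fps) * (1 - fps_X) = 1"
    by (rule inverse_mult_eq_1) simp
  ultimately show ?thesis
    unfolding fps_inverse_def[of ?f]
    by (intro fps_left_inverse'[of "inverse (?f $ 0)"]) (simp_all only: f0)
qed

lemma sum_monom2_nth:
  "finite S \<Longrightarrow> (\<Sum>s\<in>S. monom2 (f s) (g s)) $ b $ a = real (card {s\<in>S. f s = a \<and> g s = b})"
  by (simp add: fps_sum_nth monom2_nth sum.If_cases Int_def conj_commute eq_commute)

lemma xvar_power_ones_nth:
  "(xvar ^ Suc k * fps_const (Abs_fps (\<lambda>_. 1))) $ b $ a = (if b = 0 \<and> k < a then 1 else 0)"
proof -
  have "xvar ^ Suc k * fps_const (Abs_fps (\<lambda>_. 1)) = fps_const (fps_X ^ Suc k * Abs_fps (\<lambda>_. 1))"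
    by (simp only: xvar_def fps_const_power fps_const_mult)
  then show ?thesis by (simp del: power_Suc add: fps_X_power_mult_nth)
qed

lemma yvar_power_ones_nth:
  "(yvar ^ Suc k * Abs_fps (\<lambda>_. 1)) $ b $ a = (if a = 0 \<and> k < b then 1 else 0)"
  by (simp del: power_Suc add: yvar_def fps_X_power_mult_nth)

definition left_above :: "(int \<Rightarrow> bool) \<Rightarrow> int \<Rightarrow> nat" where
  "left_above P s = card {\<sigma>. s < \<sigma> \<and> \<not> P \<sigma>}"

definition right_upto :: "(int \<Rightarrow> bool) \<Rightarrow> int \<Rightarrow> nat" where
  "right_upto P s = card {\<sigma>. \<sigma> \<le> s \<and> P \<sigma>}"

definition para_monom :: "(int \<Rightarrow> bool) \<Rightarrow> int \<Rightarrow> real fps fps" where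
  "para_monom P s = monom2 (left_above P s) (right_upto P s)"

definition para_series :: "(int \<Rightarrow> bool) \<Rightarrow> real fps fps" where
  "para_series P = Abs_fps (\<lambda>b. Abs_fps (\<lambda>a.
     real (card {s. left_above P s = a \<and> right_upto P s = b})))"

definition ascents :: "(int \<Rightarrow> bool) \<Rightarrow> int set" where
  "ascents P = {s. \<not> P s \<and> P (s + 1)}"

definition descents :: "(int \<Rightarrow> bool) \<Rightarrow> int set" where
  "descents P = {s. P s \<and> \<not> P (s + 1)}"

text \<open>Its increments account for \<open>(1 - x)(1 - y)\<close> times a monomial, except at the
  jumps of \<open>P\<close>.\<close>
definition para_potential :: "(int \<Rightarrow> bool) \<Rightarrow> int \<Rightarrow> real fps fps" where
  "para_potential P s = (if P s then - ((1 - xvar) * yvar) else 1 - yvar) * para_monom P s"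

locale left_right_threshold =
  fixes P :: "int \<Rightarrow> bool" and lo hi :: int
  assumes left_le_lo: "\<sigma> \<le> lo \<Longrightarrow> \<not> P \<sigma>"
    and right_ge_hi: "hi \<le> \<sigma> \<Longrightarrow> P \<sigma>"
begin

lemma lo_less_hi: "lo < hi"
  using left_le_lo[of lo] right_ge_hi[of lo] by linarith

lemma finite_left_above: "finite {\<sigma>. s < \<sigma> \<and> \<not> P \<sigma>}"
  by (rule finite_subset[of _ "{s<..<hi}"]) (auto dest: right_ge_hi[rotated] simp: not_le[symmetric])

lemma finite_right_upto: "finite {\<sigma>. \<sigma> \<le> s \<and> P \<sigma>}"
  by (rule finite_subset[of _ "{lo<..s}"]) (auto dest: left_le_lo[rotated] simp: not_le[symmetric])

lemma left_above_pred: "left_above P (s - 1) = left_above P s + (if P s then 0 else 1)"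
proof -
  have "{\<sigma>. s - 1 < \<sigma> \<and> \<not> P \<sigma>} = (if P s then {} else {s}) \<union> {\<sigma>. s < \<sigma> \<and> \<not> P \<sigma>}"
    by (auto simp: order.strict_iff_order)
  then show ?thesis
    using finite_left_above[of s] by (simp add: left_above_def)
qed

lemma right_upto_pred: "right_upto P s = right_upto P (s - 1) + (if P s then 1 else 0)"
proof -
  have "{\<sigma>. \<sigma> \<le> s \<and> P \<sigma>} = (if P s then {s} else {}) \<union> {\<sigma>. \<sigma> \<le> s - 1 \<and> P \<sigma>}"
    by (auto simp: order.strict_iff_order)
  then show ?thesis
    using finite_right_upto[of "s - 1"] by (simp add: right_upto_def)
qed

lemma para_monom_right: "P s \<Longrightarrow> para_monom P s = yvar * para_monom P (s - 1)"
  using left_above_pred[of s] right_upto_pred[of s]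
  by (simp add: para_monom_def monom2_Suc_right)

lemma para_monom_left: "\<not> P s \<Longrightarrow> para_monom P (s - 1) = xvar * para_monom P s"
  using left_above_pred[of s] right_upto_pred[of s]
  by (simp add: para_monom_def monom2_Suc_left)

lemma para_monom_step:
  "(1 - xvar) * (1 - yvar) * para_monom P (s + 1) =
     (1 - xvar * yvar) * (of_bool (P (s + 1)) - of_bool (P s)) * para_monom P s
     + (para_potential P (s + 1) - para_potential P s)"
proof (cases "P (s + 1)")
  case True
  then have "para_monom P (s + 1) = yvar * para_monom P s"
    using para_monom_right[of "s + 1"] by simp
  with True show ?thesis
    by (cases "P s") (simp_all add: para_potential_def algebra_simps)
next
  case False
  then have "para_monom P s = xvar * para_monom P (s + 1)"
    using para_monom_left[of "s + 1"] by simp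
  with False show ?thesis
    by (cases "P s") (simp_all add: para_potential_def algebra_simps)
qed

lemma left_above_le_lo: "s \<le> lo \<Longrightarrow> left_above P s = left_above P lo + nat (lo - s)"
proof -
  assume "s \<le> lo"
  then have split: "{\<sigma>. s < \<sigma> \<and> \<not> P \<sigma>} = {s<..lo} \<union> {\<sigma>. lo < \<sigma> \<and> \<not> P \<sigma>}"
    using left_le_lo by auto
  show ?thesis
    unfolding left_above_def split by (subst card_Un_disjoint) (use finite_left_above in auto)
qed

lemma right_upto_le_lo: "s \<le> lo \<Longrightarrow> right_upto P s = 0"
proof -
  assume "s \<le> lo"
  then have empty: "{\<sigma>. \<sigma> \<le> s \<and> P \<sigma>} = {}"
    using left_le_lo by force
  show ?thesis unfolding right_upto_def empty by simp
qed

lemma right_upto_ge_hi: "hi \<le> s \<Longrightarrow> right_upto P s = right_upto P hi + nat (s - hi)"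
proof -
  assume "hi \<le> s"
  then have split: "{\<sigma>. \<sigma> \<le> s \<and> P \<sigma>} = {hi<..s} \<union> {\<sigma>. \<sigma> \<le> hi \<and> P \<sigma>}"
    using right_ge_hi by auto
  show ?thesis
    unfolding right_upto_def split by (subst card_Un_disjoint) (use finite_right_upto in auto)
qed

lemma left_above_ge_hi: "hi \<le> s \<Longrightarrow> left_above P s = 0"
proof -
  assume "hi \<le> s"
  then have empty: "{\<sigma>. s < \<sigma> \<and> \<not> P \<sigma>} = {}"
    using right_ge_hi by force
  show ?thesis unfolding left_above_def empty by simp
qed

lemma lower_level_set:
  "{s. s < lo \<and> left_above P s = a \<and> right_upto P s = b} =
     (if b = 0 \<and> left_above P lo < a then {lo - int (a - left_above P lo)} else {})"
  (is "?S = ?T")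
proof (intro set_eqI iffI)
  fix s assume "s \<in> ?S"
  then show "s \<in> ?T" using left_above_le_lo[of s] right_upto_le_lo[of s] by auto
next
  fix s assume "s \<in> ?T"
  then show "s \<in> ?S" using left_above_le_lo[of s] right_upto_le_lo[of s] by (auto split: if_splits)
qed

lemma upper_level_set:
  "{s. hi < s \<and> left_above P s = a \<and> right_upto P s = b} =
     (if a = 0 \<and> right_upto P hi < b then {hi + int (b - right_upto P hi)} else {})"
  (is "?S = ?T")
proof (intro set_eqI iffI)
  fix s assume "s \<in> ?S"
  then show "s \<in> ?T" using left_above_ge_hi[of s] right_upto_ge_hi[of s] by auto
next
  fix s assume "s \<in> ?T"
  then show "s \<in> ?S" using left_above_ge_hi[of s] right_upto_ge_hi[of s] by (auto split: if_splits)
qed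

lemma para_level_split:
  "{s. left_above P s = a \<and> right_upto P s = b} =
     {s. s < lo \<and> left_above P s = a \<and> right_upto P s = b}
     \<union> {s\<in>{lo..hi}. left_above P s = a \<and> right_upto P s = b}
     \<union> {s. hi < s \<and> left_above P s = a \<and> right_upto P s = b}"
  by auto

lemma finite_para_level: "finite {s. left_above P s = a \<and> right_upto P s = b}"
proof -
  have "finite {s\<in>{lo..hi}. left_above P s = a \<and> right_upto P s = b}" by (rule finite_subset[of _ "{lo..hi}"]) auto
  then show ?thesis unfolding para_level_split lower_level_set upper_level_set by simp
qed

lemma para_series_split:
  "para_series P = (\<Sum>s\<in>{lo..hi}. para_monom P s)
     + xvar ^ Suc (left_above P lo) * fps_const (Abs_fps (\<lambda>_. 1))
     + yvar ^ Suc (right_upto P hi) * Abs_fps (\<lambda>_. 1)" (is "_ = ?rhs")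
proof (intro fps_ext)
  fix b a
  let ?L = "{s. s < lo \<and> left_above P s = a \<and> right_upto P s = b}"
    and ?M = "{s\<in>{lo..hi}. left_above P s = a \<and> right_upto P s = b}"
    and ?H = "{s. hi < s \<and> left_above P s = a \<and> right_upto P s = b}"
  have "finite ?M" by (rule finite_subset[of _ "{lo..hi}"]) auto
  moreover have "?L \<inter> ?M = {}" "(?L \<union> ?M) \<inter> ?H = {}" using lo_less_hi by auto
  moreover have "finite ?L" "finite ?H" unfolding lower_level_set upper_level_set by simp_all
  ultimately have card: "card {s. left_above P s = a \<and> right_upto P s = b} = card ?L + card ?M + card ?H"
    unfolding para_level_split by (simp add: card_Un_disjoint)
  show "para_series P $ b $ a = ?rhs $ b $ a"
    unfolding para_series_def fps_nth_Abs_fps card fps_add_nth para_monom_def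
      sum_monom2_nth[OF finite_atLeastAtMost_int] xvar_power_ones_nth yvar_power_ones_nth
    by (simp add: lower_level_set upper_level_set)
qed

lemma ascents_subset: "ascents P \<subseteq> {lo - 1..hi - 1}"
proof
  fix s assume "s \<in> ascents P"
  then have "\<not> P s" "P (s + 1)" by (simp_all add: ascents_def)
  then have "\<not> hi \<le> s" "\<not> s + 1 \<le> lo" using left_le_lo right_ge_hi by blast+
  then show "s \<in> {lo - 1..hi - 1}" by simp
qed

lemma descents_subset: "descents P \<subseteq> {lo - 1..hi - 1}"
proof
  fix s assume "s \<in> descents P"
  then have "P s" "\<not> P (s + 1)" by (simp_all add: descents_def)
  then have "\<not> hi \<le> s + 1" "\<not> s \<le> lo" using left_le_lo right_ge_hi by blast+
  then show "s \<in> {lo - 1..hi - 1}" by simp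
qed

lemma finite_ascents: "finite (ascents P)"
  using ascents_subset by (rule finite_subset) simp

lemma finite_descents: "finite (descents P)"
  using descents_subset by (rule finite_subset) simp

lemma sum_jumps:
  "(\<Sum>s\<in>{lo - 1..hi - 1}. (of_bool (P (s + 1)) - of_bool (P s)) * para_monom P s) =
     (\<Sum>s\<in>ascents P. para_monom P s) - (\<Sum>s\<in>descents P. para_monom P s)"
proof -
  have "(\<Sum>s\<in>{lo - 1..hi - 1}. (of_bool (P (s + 1)) - of_bool (P s)) * para_monom P s) =
     (\<Sum>s\<in>{lo - 1..hi - 1}. (if s \<in> ascents P then para_monom P s else 0)
        - (if s \<in> descents P then para_monom P s else 0))"
    by (intro sum.cong) (auto simp: ascents_def descents_def)
  also have "\<dots> = (\<Sum>s\<in>{lo - 1..hi - 1} \<inter> ascents P. para_monom P s)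
      - (\<Sum>s\<in>{lo - 1..hi - 1} \<inter> descents P. para_monom P s)"
    by (simp add: sum_subtractf sum.inter_restrict)
  finally show ?thesis
    using ascents_subset descents_subset by (simp add: Int_absorb1)
qed

lemma one_minus_xvar_one_minus_yvar_para_series:
  "(1 - xvar) * (1 - yvar) * para_series P =
     (1 - xvar * yvar) * ((\<Sum>s\<in>ascents P. para_monom P s) - (\<Sum>s\<in>descents P. para_monom P s))"
proof -
  let ?D = "(1 - xvar) * (1 - yvar)"
  have "?D * (\<Sum>s\<in>{lo..hi}. para_monom P s) =
      (\<Sum>s\<in>{lo - 1..hi - 1}. ?D * para_monom P (s + 1))"
    by (simp only: sum_int_shift[where f = "\<lambda>s. ?D * para_monom P s"] sum_distrib_left)
  also have "\<dots> = (\<Sum>s\<in>{lo - 1..hi - 1}.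
        (1 - xvar * yvar) * (of_bool (P (s + 1)) - of_bool (P s)) * para_monom P s)
      + (\<Sum>s\<in>{lo - 1..hi - 1}. para_potential P (s + 1) - para_potential P s)"
    by (simp only: para_monom_step sum.distrib)
  also have "\<dots> = (1 - xvar * yvar) *
        (\<Sum>s\<in>{lo - 1..hi - 1}. (of_bool (P (s + 1)) - of_bool (P s)) * para_monom P s)
      + (para_potential P hi - para_potential P (lo - 1))"
    using lo_less_hi by (simp add: sum_int_telescope sum_distrib_left mult.assoc)
  finally have middle: "?D * (\<Sum>s\<in>{lo..hi}. para_monom P s) =
      (1 - xvar * yvar) * ((\<Sum>s\<in>ascents P. para_monom P s) - (\<Sum>s\<in>descents P. para_monom P s))
      + (para_potential P hi - para_potential P (lo - 1))"
    by (simp only: sum_jumps)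
  have lower_tail: "(1 - xvar) * fps_const (Abs_fps (\<lambda>_. 1)) = 1"
    unfolding xvar_def by (metis fps_const_1_eq_1 fps_const_sub fps_const_mult one_minus_fps_X_mult_ones)
  have upper_tail: "(1 - yvar) * Abs_fps (\<lambda>_. 1) = 1"
    by (simp add: yvar_def one_minus_fps_X_mult_ones)
  have potential_hi: "para_potential P hi = - ((1 - xvar) * yvar ^ Suc (right_upto P hi))"
    using right_ge_hi[of hi] left_above_ge_hi[of hi]
    by (simp add: para_potential_def para_monom_def monom2_def)
  have potential_lo: "para_potential P (lo - 1) = (1 - yvar) * xvar ^ Suc (left_above P lo)"
    using left_le_lo[of "lo - 1"] left_above_le_lo[of "lo - 1"] right_upto_le_lo[of "lo - 1"]
    by (simp add: para_potential_def para_monom_def monom2_def)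
  have "?D * para_series P = ?D * (\<Sum>s\<in>{lo..hi}. para_monom P s)
      + (1 - yvar) * xvar ^ Suc (left_above P lo) * ((1 - xvar) * fps_const (Abs_fps (\<lambda>_. 1)))
      + (1 - xvar) * yvar ^ Suc (right_upto P hi) * ((1 - yvar) * Abs_fps (\<lambda>_. 1))"
    unfolding para_series_split by (simp only: algebra_simps)
  also have "\<dots> = (1 - xvar * yvar) *
      ((\<Sum>s\<in>ascents P. para_monom P s) - (\<Sum>s\<in>descents P. para_monom P s))"
    unfolding middle lower_tail upper_tail potential_hi potential_lo by simp
  finally show ?thesis .
qed

lemma para_series_eq:
  "para_series P = (1 - xvar * yvar) * inverse ((1 - xvar) * (1 - yvar)) *
     ((\<Sum>s\<in>ascents P. para_monom P s) - (\<Sum>s\<in>descents P. para_monom P s))"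
proof -
  let ?D = "(1 - xvar) * (1 - yvar)"
  have "para_series P = (inverse ?D * ?D) * para_series P"
    by (simp only: inverse_mult_one_minus_xvar_one_minus_yvar mult_1)
  also have "\<dots> = inverse ?D * (?D * para_series P)"
    by (rule mult.assoc)
  finally show ?thesis
    unfolding one_minus_xvar_one_minus_yvar_para_series by (simp only: mult_ac)
qed

end

lemma rvec_set_sink: "rvec m n (set_sink m u s) = rvec m n u"
proof
  fix i
  have "{j \<in> {1..m - 1}. set_sink m u s (A j) + 1 \<le> int i - 1} =
      {j \<in> {1..m - 1}. u (A j) + 1 \<le> int i - 1}"
    by (auto simp: set_sink_def)
  then show "rvec m n (set_sink m u s) i = rvec m n u i"
    by (simp add: rvec_def set_sink_def)
qed

lemma is_right_set_sink: "is_right m n (set_sink m u s) = is_right m n u"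
  by (rule ext) (simp add: is_right_def rvec_set_sink)

lemma xpara_set_sink: "xpara m n (set_sink m u s) = left_above (is_right m n u) s"
  by (simp add: xpara_def left_above_def is_right_set_sink) (simp add: set_sink_def)

lemma ypara_set_sink: "ypara m n (set_sink m u s) = right_upto (is_right m n u) s"
  by (simp add: ypara_def right_upto_def is_right_set_sink) (simp add: set_sink_def)

lemma is_right_threshold:
  assumes "1 \<le> n"
  obtains lo hi where "left_right_threshold (is_right m n u) lo hi"
proof
  define R where "R = (\<Sum>i\<in>{1..n}. \<bar>rvec m n u i\<bar>)"
  have r_bound: "\<bar>rvec m n u (nat (\<sigma> mod int n) + 1)\<bar> \<le> R" for \<sigma>
  proof -
    have "nat (\<sigma> mod int n) < n" using assms by (simp add: nat_less_iff)
    then show ?thesis unfolding R_def by (intro member_le_sum) auto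
  qed
  show "left_right_threshold (is_right m n u) (- (R + 1) * int n) ((R + 1) * int n)"
  proof
    fix \<sigma> assume "\<sigma> \<le> - (R + 1) * int n"
    then have "\<sigma> div int n \<le> - (R + 1)"
      using zdiv_mono1[of \<sigma> "- (R + 1) * int n" "int n"] assms by simp
    then show "\<not> is_right m n u \<sigma>"
      using r_bound[of \<sigma>] unfolding is_right_def by linarith
  next
    fix \<sigma> assume "(R + 1) * int n \<le> \<sigma>"
    then have "R + 1 \<le> \<sigma> div int n"
      using zdiv_mono1[of "(R + 1) * int n" \<sigma> "int n"] assms by simp
    then show "is_right m n u \<sigma>"
      using r_bound[of \<sigma>] unfolding is_right_def by linarith
  qed
qed

theorem lemma15p1:
  fixes m n :: nat and u :: "vert \<Rightarrow> int"
  assumes "1 \<le> m" and "1 \<le> n"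
    and "parking m n u" and "sorted_conf m n u"
  shows "(\<forall>a b. finite {s::int. xpara m n (set_sink m u s) = a \<and> ypara m n (set_sink m u s) = b})
    \<and> finite (Splus m n u) \<and> finite (Sminus m n u)
    \<and> Fser m n u =
        (1 - xvar * yvar) * inverse ((1 - xvar) * (1 - yvar)) *
        ((\<Sum>s\<in>Splus m n u. monom2 (xpara m n (set_sink m u s)) (ypara m n (set_sink m u s)))
         - (\<Sum>s\<in>Sminus m n u. monom2 (xpara m n (set_sink m u s)) (ypara m n (set_sink m u s))))"
proof -
  obtain lo hi where "left_right_threshold (is_right m n u) lo hi"
    using is_right_threshold[OF \<open>1 \<le> n\<close>] .
  then interpret left_right_threshold "is_right m n u" lo hi .
  have "Splus m n u = ascents (is_right m n u)" "Sminus m n u = descents (is_right m n u)"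
    by (simp_all add: Splus_def Sminus_def ascents_def descents_def)
  moreover have "Fser m n u = para_series (is_right m n u)"
    by (simp add: Fser_def para_series_def xpara_set_sink ypara_set_sink)
  ultimately show ?thesis
    using finite_para_level finite_ascents finite_descents para_series_eq
    by (simp add: xpara_set_sink ypara_set_sink para_monom_def)
qed

end
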